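(* Consider the closed-loop system $$\dot X(t)=f\big(X(t),u(0,t)\big),\quad u_t(x,t)=v\big(u(x,t)\big)u_x(x,t),\quad u(1,t)=\kappa\big(p(1,t)\big),$$ with $p(x,t)=X(t)+\int_0^x f(p(y,t),u(y,t))\Gamma(u(y,t),u_y(y,t),y)\,dy$, $\Gamma(u,u_x,x)=\frac{1}{v(u)}-\frac{x v'(u)u_x}{v(u)^2}$, under Assumptions (A1)–(A3) below, and let $M>0$ be fixed. There exists a class $\mathcal{K}_\infty$ function $\rho_1$ such that for all solutions of the closed-loop system satisfying $$-M<\frac{v'\big(u(x,t)\big)u_x(x,t)}{v\big(u(x,t)\big)}<1\quad\text{for all }x\in[0,1],\ t\ge0,$$ the following holds: $$\|p(t)\|_\infty+\|p_x(t)\|_\infty\le\rho_1\big(|X(t)|+\|u(t)\|_\infty\big)\quad\text{for all }t\ge0.$$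
   Context: $X(t)\in\mathbb{R}^n$, $u(x,t)\in\mathbb{R}$, $x\in[0,1]$, $t\ge0$; $f:\mathbb{R}^n\times\mathbb{R}\to\mathbb{R}^n$ is continuously differentiable with $f(0,0)=0$. (A1) $v:\mathbb{R}\to\mathbb{R}_+$ is twice continuously differentiable and $v(u)\ge\underline v>0$ for all $u$. (A2) $\dot X=f(X,\omega)$ is strongly forward complete w.r.t. $\omega$: there exist smooth $R:\mathbb{R}^n\to\mathbb{R}_+$ and class $\mathcal{K}_\infty$ functions $\alpha_1,\alpha_2,\alpha_3$ with $\alpha_1(|X|)\le R(X)\le\alpha_2(|X|)$, $\frac{\partial R}{\partial X}f(X,\omega)\le R(X)+\alpha_3(|\omega|)$. (A3) $\kappa:\mathbb{R}^n\to\mathbb{R}$ is twice continuously differentiable, $\kappa(0)=0$, and $\dot X=f(X,\kappa(X)+\omega)$ is input-to-state stable w.r.t. $\omega$. Solutions are continuously differentiable functions $X$, $u$ satisfying the closed-loop equations. For vector-valued $p$, $\|p(t)\|_\infty=\max_{x\in[0,1]}|p(x,t)|$ and $\|p_x(t)\|_\infty=\max_{x\in[0,1]}|p_x(x,t)|$ with $|\cdot|$ Euclidean; $\|u(t)\|_\infty=\max_{x\in[0,1]}|u(x,t)|$. *)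

theory Defs
  imports "HOL-Analysis.Analysis"
begin

definition C1_fun :: "('a::real_normed_vector \<Rightarrow> 'b::real_normed_vector) \<Rightarrow> bool" where
  "C1_fun g \<longleftrightarrow> (\<exists>g'. (\<forall>x. (g has_derivative blinfun_apply (g' x)) (at x)) \<and> continuous_on UNIV g')"

definition C2_fun :: "('a::real_normed_vector \<Rightarrow> 'b::real_normed_vector) \<Rightarrow> bool" where
  "C2_fun g \<longleftrightarrow> (\<exists>g'. (\<forall>x. (g has_derivative blinfun_apply (g' x)) (at x)) \<and> C1_fun g')"

text \<open>Smooth (C-infinity) real-valued functions: all iterated directional derivatives exist.\<close>
definition smooth_fun :: "('a::real_normed_vector \<Rightarrow> real) \<Rightarrow> bool" where
  "smooth_fun g \<longleftrightarrow> (\<exists>S. g \<in> S \<and>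
     (\<forall>h\<in>S. \<exists>Dh. (\<forall>x. (h has_derivative Dh x) (at x)) \<and> (\<forall>e. (\<lambda>x. Dh x e) \<in> S)))"

definition class_K :: "(real \<Rightarrow> real) \<Rightarrow> bool" where
  "class_K \<alpha> \<longleftrightarrow> continuous_on {0..} \<alpha> \<and> \<alpha> 0 = 0 \<and> strict_mono_on {0..} \<alpha>"

definition class_Kinf :: "(real \<Rightarrow> real) \<Rightarrow> bool" where
  "class_Kinf \<alpha> \<longleftrightarrow> class_K \<alpha> \<and> filterlim \<alpha> at_top at_top"

definition class_KL :: "(real \<Rightarrow> real \<Rightarrow> real) \<Rightarrow> bool" where
  "class_KL \<beta> \<longleftrightarrow> (\<forall>t\<ge>0. class_K (\<lambda>r. \<beta> r t)) \<and>
     (\<forall>r\<ge>0. (\<forall>s t. 0 \<le> s \<longrightarrow> s \<le> t \<longrightarrow> \<beta> r t \<le> \<beta> r s) \<and> ((\<lambda>t. \<beta> r t) \<longlongrightarrow> 0) at_top)"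

text \<open>Input-to-state stability of \<open>X' = F X \<omega>\<close> w.r.t. measurable, locally essentially
  bounded inputs; (Caratheodory) solutions on \<open>[0,T)\<close> are continuous functions satisfying the
  integral equation. The essential sup norm of \<omega> on [0,t] enters via all its upper bounds c.\<close>
definition ISS :: "('a::euclidean_space \<Rightarrow> real \<Rightarrow> 'a) \<Rightarrow> bool" where
  "ISS F \<longleftrightarrow> (\<exists>\<beta> \<gamma>. class_KL \<beta> \<and> class_K \<gamma> \<and>
     (\<forall>\<omega> X T. \<omega> \<in> borel_measurable lborel \<and>
        (\<forall>S. \<exists>B. AE s in lborel. s \<in> {0..S} \<longrightarrow> \<bar>\<omega> s\<bar> \<le> B) \<and>
        0 < T \<and> continuous_on {0..<T} X \<and>
        (\<forall>t\<in>{0..<T}. ((\<lambda>s. F (X s) (\<omega> s)) has_integral (X t - X 0)) {0..t})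
      \<longrightarrow> (\<forall>t\<in>{0..<T}. \<forall>c\<ge>0. (AE s in lborel. s \<in> {0..t} \<longrightarrow> \<bar>\<omega> s\<bar> \<le> c) \<longrightarrow>
             norm (X t) \<le> \<beta> (norm (X 0)) t + \<gamma> c)))"

definition Gamma :: "(real \<Rightarrow> real) \<Rightarrow> real \<Rightarrow> real \<Rightarrow> real \<Rightarrow> real" where
  "Gamma v u ux x = 1 / v u - x * deriv v u * ux / (v u)\<^sup>2"

definition closed_loop_solution ::
  "('a::euclidean_space \<Rightarrow> real \<Rightarrow> 'a) \<Rightarrow> (real \<Rightarrow> real) \<Rightarrow> ('a \<Rightarrow> real) \<Rightarrow>
   (real \<Rightarrow> 'a) \<Rightarrow> (real \<Rightarrow> real \<Rightarrow> real) \<Rightarrow> (real \<Rightarrow> real \<Rightarrow> real) \<Rightarrow> (real \<Rightarrow> real \<Rightarrow> real) \<Rightarrow>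
   (real \<Rightarrow> real \<Rightarrow> 'a) \<Rightarrow> bool" where
  "closed_loop_solution f v \<kappa> X u ux ut p \<longleftrightarrow>
     (\<forall>t\<ge>0. (X has_vector_derivative f (X t) (u 0 t)) (at t within {0..})) \<and>
     continuous_on ({0..1} \<times> {0..}) (\<lambda>z. ux (fst z) (snd z)) \<and>
     continuous_on ({0..1} \<times> {0..}) (\<lambda>z. ut (fst z) (snd z)) \<and>
     (\<forall>x\<in>{0..1}. \<forall>t\<ge>0. ((\<lambda>z. u (fst z) (snd z)) has_derivative
          (\<lambda>h. ux x t * fst h + ut x t * snd h)) (at (x, t) within {0..1} \<times> {0..})) \<and>
     (\<forall>x\<in>{0..1}. \<forall>t\<ge>0. ut x t = v (u x t) * ux x t) \<and>
     (\<forall>t\<ge>0. u 1 t = \<kappa> (p 1 t)) \<and>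
     (\<forall>x\<in>{0..1}. \<forall>t\<ge>0.
        ((\<lambda>y. Gamma v (u y t) (ux y t) y *\<^sub>R f (p y t) (u y t)) has_integral (p x t - X t)) {0..x})"

end

theory Submission
  imports Defs
begin

text \<open>For fixed \<open>t\<close> the profile \<open>p(\<cdot>, t)\<close> solves the ODE \<open>p\<^sub>x = \<Gamma> f(p, u)\<close> in the spatial
  variable with \<open>p(0, t) = X(t)\<close>, and the hypothesis \<open>-M < v'(u) u\<^sub>x / v(u) < 1\<close> gives
  \<open>0 < \<Gamma> \<le> (1 + M) / v_low\<close>. Along this ODE the forward-completeness function \<open>R\<close> grows at
  most exponentially, so with \<open>s = |X(t)| + \<parallel>u(t)\<parallel>\<close> Gronwall's inequality bounds \<open>R(p)\<close>,
  hence \<open>|p|\<close>, by a monotone function of \<open>s\<close>; then \<open>p\<^sub>x = \<Gamma> f(p, u)\<close> is bounded by the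
  maximum of \<open>|f|\<close> on a ball whose radius depends on \<open>s\<close>. The resulting gain is monotone and
  vanishes as \<open>s \<rightarrow> 0\<close>, so it is dominated by a class \<open>\<K>\<^sub>\<infinity>\<close> function.\<close>

lemma class_Kinf_class_K: "class_Kinf \<alpha> \<Longrightarrow> class_K \<alpha>"
  by (simp add: class_Kinf_def)

lemma class_K_mono_on: "class_K \<alpha> \<Longrightarrow> mono_on {0..} \<alpha>"
  by (auto simp: class_K_def intro: strict_mono_on_imp_mono_on)

lemma class_K_nonneg: "class_K \<alpha> \<Longrightarrow> 0 \<le> r \<Longrightarrow> 0 \<le> \<alpha> r"
  using mono_onD[OF class_K_mono_on, of \<alpha> 0 r] by (simp add: class_K_def)

lemma class_K_pos: "class_K \<alpha> \<Longrightarrow> 0 < r \<Longrightarrow> 0 < \<alpha> r"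
  unfolding class_K_def by (metis atLeast_iff order.refl less_imp_le strict_mono_onD)

section \<open>Class \<open>\<K>\<^sub>\<infinity>\<close> majorants of monotone gains\<close>

lemma mono_on_integrable_on:
  fixes m :: "real \<Rightarrow> real"
  assumes "mono_on {0..} m" "0 \<le> a"
  shows "m integrable_on {a..b}"
  by (rule integrable_on_mono_on, rule mono_on_subset[OF assms(1)]) (use assms(2) in auto)

lemma mono_on_integral_lower:
  fixes m :: "real \<Rightarrow> real"
  assumes m: "mono_on {0..} m" and ab: "0 \<le> a" "a \<le> b"
  shows "(b - a) * m a \<le> integral {a..b} m"
proof -
  have "integral {a..b} (\<lambda>_. m a) \<le> integral {a..b} m"
    using ab by (intro integral_le mono_on_integrable_on[OF m]) (auto intro: mono_onD[OF m])
  then show ?thesis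
    using ab by simp
qed

lemma mono_on_integral_upper:
  fixes m :: "real \<Rightarrow> real"
  assumes m: "mono_on {0..} m" and ab: "0 \<le> a" "a \<le> b"
  shows "integral {a..b} m \<le> (b - a) * m b"
proof -
  have "integral {a..b} m \<le> integral {a..b} (\<lambda>_. m b)"
    using ab by (intro integral_le mono_on_integrable_on[OF m]) (auto intro: mono_onD[OF m])
  then show ?thesis
    using ab by simp
qed

lemma mono_on_integral_split:
  fixes m :: "real \<Rightarrow> real"
  assumes m: "mono_on {0..} m" and ab: "0 \<le> a" "a \<le> b"
  shows "integral {0..b} m = integral {0..a} m + integral {a..b} m"
  using Henstock_Kurzweil_Integration.integral_combine[of 0 a b m]
    mono_on_integrable_on[OF m, of 0 b] ab by simp

lemma mono_on_integral_average_mono: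
  fixes m :: "real \<Rightarrow> real"
  assumes m: "mono_on {0..} m" and ab: "0 < a" "a \<le> b"
  shows "integral {0..a} m / a \<le> integral {0..b} m / b"
proof -
  have "b * integral {0..a} m = a * integral {0..a} m + (b - a) * integral {0..a} m"
    by algebra
  also have "\<dots> \<le> a * integral {0..a} m + a * ((b - a) * m a)"
    using mult_left_mono[OF mono_on_integral_upper[OF m, of 0 a], of "b - a"] ab
    by (simp add: algebra_simps)
  also have "\<dots> \<le> a * integral {0..b} m"
    using mult_left_mono[OF mono_on_integral_lower[OF m, of a b], of a] ab
      mono_on_integral_split[OF m, of a b]
    by (simp add: algebra_simps)
  finally show ?thesis
    using ab by (simp add: field_simps)
qed

text \<open>Averaging \<open>m\<close> over \<open>[0, 2 s]\<close> makes the majorant continuous even where \<open>m\<close> jumps,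
  and adding \<open>s\<close> makes it strictly increasing and unbounded.\<close>

definition averaged_majorant :: "(real \<Rightarrow> real) \<Rightarrow> real \<Rightarrow> real" where
  "averaged_majorant m s = (if s \<le> 0 then s else s + integral {0..2 * s} m / s)"

lemma averaged_majorant_pos: "0 < s \<Longrightarrow> averaged_majorant m s = s + integral {0..2 * s} m / s"
  by (simp add: averaged_majorant_def)

context
  fixes m :: "real \<Rightarrow> real"
  assumes m: "mono_on {0..} m" and m_nonneg: "\<And>s. 0 \<le> s \<Longrightarrow> 0 \<le> m s"
begin

lemma mono_on_integral_nonneg: "0 \<le> x \<Longrightarrow> 0 \<le> integral {0..x} m"
  by (intro integral_nonneg mono_on_integrable_on[OF m]) (auto intro: m_nonneg)

lemma mono_on_le_integral_average: "0 < s \<Longrightarrow> m s \<le> integral {0..2 * s} m / s"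
  using mono_on_integral_lower[OF m, of s "2 * s"] mono_on_integral_split[OF m, of s "2 * s"]
    mono_on_integral_nonneg[of s]
  by (simp add: field_simps)

lemma mono_on_integral_average_le: "0 < s \<Longrightarrow> integral {0..2 * s} m / s \<le> 2 * m (2 * s)"
  using mono_on_integral_upper[OF m, of 0 "2 * s"] by (simp add: field_simps)

lemma averaged_majorant_strict_mono_on: "strict_mono_on {0..} (averaged_majorant m)"
proof (rule strict_mono_onI)
  fix a b :: real
  assume "a \<in> {0..}" "b \<in> {0..}" "a < b"
  then consider "a = 0" "0 < b" | "0 < a" "a < b"
    by fastforce
  then show "averaged_majorant m a < averaged_majorant m b"
  proof cases
    case 1
    then show ?thesis
      using mono_on_integral_nonneg[of "2 * b"] by (simp add: averaged_majorant_def add_pos_nonneg)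
  next
    case 2
    then have "integral {0..2 * a} m / (2 * a) \<le> integral {0..2 * b} m / (2 * b)"
      by (intro mono_on_integral_average_mono[OF m]) auto
    then have "integral {0..2 * a} m / a \<le> integral {0..2 * b} m / b"
      by (simp add: field_simps)
    then show ?thesis
      using 2 by (simp add: averaged_majorant_pos)
  qed
qed

lemma averaged_majorant_tendsto_0:
  assumes m_tendsto: "(m \<longlongrightarrow> 0) (at_right 0)"
  shows "(averaged_majorant m \<longlongrightarrow> 0) (at_right 0)"
proof -
  have "((\<lambda>s. 2 * s) \<longlongrightarrow> 0) (at_right (0::real))"
    by (rule tendsto_mult_right_zero[OF tendsto_ident_at])
  then have "filterlim (\<lambda>s. 2 * s) (at_right 0) (at_right (0::real))"
    by (rule tendsto_imp_filterlim_at_right) (rule eventually_at_rightI[of 0 1], simp_all)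
  then have "((\<lambda>s. m (2 * s)) \<longlongrightarrow> 0) (at_right 0)"
    by (rule filterlim_compose[OF m_tendsto])
  then have upper_tendsto: "((\<lambda>s. s + 2 * m (2 * s)) \<longlongrightarrow> 0) (at_right 0)"
    by (intro tendsto_add_zero tendsto_ident_at tendsto_mult_right_zero)
  have lower: "\<forall>\<^sub>F s in at_right 0. 0 \<le> averaged_majorant m s"
    by (rule eventually_at_rightI[of 0 1]) (simp_all add: averaged_majorant_pos mono_on_integral_nonneg)
  have upper: "\<forall>\<^sub>F s in at_right 0. averaged_majorant m s \<le> s + 2 * m (2 * s)"
    by (rule eventually_at_rightI[of 0 1]) (simp_all add: averaged_majorant_pos mono_on_integral_average_le)
  show ?thesis
    by (rule tendsto_sandwich[OF lower upper tendsto_const upper_tendsto])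
qed

lemma averaged_majorant_isCont:
  assumes "0 < x"
  shows "isCont (averaged_majorant m) x"
proof -
  have "continuous_on {0..2 * x + 2} (\<lambda>y. integral {0..y} m)"
    by (rule indefinite_integral_continuous_1[OF mono_on_integrable_on[OF m]]) simp
  then have "continuous_on {0<..<x + 1} (\<lambda>s. integral {0..2 * s} m)"
    by (rule continuous_on_compose2) (auto intro!: continuous_intros)
  then have "continuous_on {0<..<x + 1} (\<lambda>s. s + integral {0..2 * s} m / s)"
    by (auto intro!: continuous_intros)
  then have "continuous_on {0<..<x + 1} (averaged_majorant m)"
    by (rule continuous_on_eq) (simp add: averaged_majorant_pos)
  then show ?thesis
    by (rule continuous_on_interior) (use assms in \<open>simp add: interior_open\<close>)
qed

lemma averaged_majorant_continuous_on:
  assumes m_tendsto: "(m \<longlongrightarrow> 0) (at_right 0)"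
  shows "continuous_on {0..} (averaged_majorant m)"
  unfolding continuous_on_eq_continuous_within
proof
  fix x :: real
  assume x: "x \<in> {0..}"
  show "continuous (at x within {0..}) (averaged_majorant m)"
  proof (cases "x = 0")
    case True
    have "averaged_majorant m 0 = 0"
      by (simp add: averaged_majorant_def)
    with averaged_majorant_tendsto_0[OF m_tendsto] True show ?thesis
      by (simp add: continuous_within at_within_Ici_at_right)
  next
    case False
    with x have "0 < x"
      by simp
    then show ?thesis
      by (rule continuous_at_imp_continuous_at_within[OF averaged_majorant_isCont])
  qed
qed

lemma averaged_majorant_at_top: "filterlim (averaged_majorant m) at_top at_top"
proof (rule filterlim_at_top_mono[OF filterlim_ident eventually_at_top_linorderI])
  fix s :: real
  assume "1 \<le> s"
  then show "s \<le> averaged_majorant m s"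
    using divide_nonneg_pos[OF mono_on_integral_nonneg[of "2 * s"], of s]
    by (simp add: averaged_majorant_pos)
qed

lemma class_Kinf_majorant:
  assumes m_tendsto: "(m \<longlongrightarrow> 0) (at_right 0)"
  shows "\<exists>\<rho>. class_Kinf \<rho> \<and> (\<forall>s\<ge>0. m s \<le> \<rho> s)"
proof (intro exI conjI allI impI)
  have "averaged_majorant m 0 = 0"
    by (simp add: averaged_majorant_def)
  then show "class_Kinf (averaged_majorant m)"
    using averaged_majorant_continuous_on[OF m_tendsto] averaged_majorant_strict_mono_on
      averaged_majorant_at_top
    unfolding class_Kinf_def class_K_def by blast
  have "m 0 \<le> 0"
  proof (rule tendsto_lowerbound[OF m_tendsto])
    show "\<forall>\<^sub>F s in at_right 0. m 0 \<le> m s"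
      by (rule eventually_at_rightI[of 0 1]) (auto intro: mono_onD[OF m])
  qed simp
  then show "m s \<le> averaged_majorant m s" if "0 \<le> s" for s
  proof (cases "s = 0")
    case False
    with that show ?thesis
      using mono_on_le_integral_average[of s] by (simp add: averaged_majorant_pos)
  qed (simp add: averaged_majorant_def)
qed

end

section \<open>Generalised inverses and maxima over balls\<close>

text \<open>For \<open>\<alpha>\<close> of class \<open>\<K>\<^sub>\<infinity>\<close> this is the inverse of \<open>\<alpha>\<close> on \<open>[0, \<infinity>)\<close>;
  the supremum form spares us proving that \<open>\<alpha>\<close> is invertible.\<close>

definition upper_inverse :: "(real \<Rightarrow> real) \<Rightarrow> real \<Rightarrow> real" where
  "upper_inverse \<alpha> a = Sup {r. 0 \<le> r \<and> \<alpha> r \<le> a}"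

lemma upper_inverse_bdd_above:
  assumes "class_Kinf \<alpha>"
  shows "bdd_above {r. 0 \<le> r \<and> \<alpha> r \<le> a}"
proof -
  obtain N where N: "\<And>r. N \<le> r \<Longrightarrow> a + 1 \<le> \<alpha> r"
    using assms unfolding class_Kinf_def filterlim_at_top eventually_at_top_linorder by blast
  have "r \<le> max N 0" if "0 \<le> r" "\<alpha> r \<le> a" for r
    using N[of r] that by linarith
  then show ?thesis
    by (intro bdd_aboveI[of _ "max N 0"]) auto
qed

lemma upper_inverse_upper:
  assumes "class_Kinf \<alpha>" "0 \<le> r" "\<alpha> r \<le> a"
  shows "r \<le> upper_inverse \<alpha> a"
  unfolding upper_inverse_def
  using assms by (intro cSup_upper upper_inverse_bdd_above) auto

lemma upper_inverse_nonneg: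
  assumes "class_Kinf \<alpha>" "0 \<le> a"
  shows "0 \<le> upper_inverse \<alpha> a"
  using assms by (intro upper_inverse_upper) (auto simp: class_Kinf_def class_K_def)

lemma upper_inverse_mono:
  assumes "class_Kinf \<alpha>" "0 \<le> a" "a \<le> b"
  shows "upper_inverse \<alpha> a \<le> upper_inverse \<alpha> b"
  unfolding upper_inverse_def
proof (rule cSup_subset_mono)
  show "{r. 0 \<le> r \<and> \<alpha> r \<le> a} \<noteq> {}"
    using assms by (auto simp: class_Kinf_def class_K_def intro!: exI[of _ 0])
qed (use assms upper_inverse_bdd_above in auto)

lemma upper_inverse_le:
  assumes "class_K \<alpha>" "0 \<le> a" "0 \<le> e" "a \<le> \<alpha> e"
  shows "upper_inverse \<alpha> a \<le> e"
  unfolding upper_inverse_def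
proof (rule cSup_least)
  show "{r. 0 \<le> r \<and> \<alpha> r \<le> a} \<noteq> {}"
    using assms by (auto simp: class_K_def intro!: exI[of _ 0])
  show "r \<le> e" if "r \<in> {r. 0 \<le> r \<and> \<alpha> r \<le> a}" for r
  proof (rule ccontr)
    assume "\<not> r \<le> e"
    then have "\<alpha> e < \<alpha> r"
      using assms(1,3) unfolding class_K_def by (auto intro: strict_mono_onD)
    with that assms(4) show False
      by simp
  qed
qed

lemma upper_inverse_tendsto_0:
  assumes \<alpha>: "class_Kinf \<alpha>" and g: "(g \<longlongrightarrow> 0) F" "\<forall>\<^sub>F x in F. 0 \<le> g x"
  shows "((\<lambda>x. upper_inverse \<alpha> (g x)) \<longlongrightarrow> 0) F"
proof (rule order_tendstoI)
  show "\<forall>\<^sub>F x in F. e < upper_inverse \<alpha> (g x)" if "e < 0" for e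
    using g(2) by eventually_elim (use that upper_inverse_nonneg[OF \<alpha>] in fastforce)
  show "\<forall>\<^sub>F x in F. upper_inverse \<alpha> (g x) < e" if "0 < e" for e
  proof -
    have "0 < \<alpha> (e / 2)"
      using that class_K_pos[OF class_Kinf_class_K[OF \<alpha>]] by simp
    with g(1) have "\<forall>\<^sub>F x in F. g x < \<alpha> (e / 2)"
      by (rule order_tendstoD)
    with g(2) show ?thesis
    proof eventually_elim
      case (elim x)
      then have "upper_inverse \<alpha> (g x) \<le> e / 2"
        using that by (intro upper_inverse_le class_Kinf_class_K[OF \<alpha>]) auto
      then show ?case
        using that by simp
    qed
  qed
qed

definition sup_norm_cball :: "('a::real_normed_vector \<Rightarrow> 'b::real_normed_vector) \<Rightarrow> real \<Rightarrow> real" where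
  "sup_norm_cball F r = (SUP z\<in>cball 0 r. norm (F z))"

lemma sup_norm_cball_bdd_above:
  fixes F :: "'a::{heine_borel,real_normed_vector} \<Rightarrow> 'b::real_normed_vector"
  assumes "continuous_on UNIV F"
  shows "bdd_above ((\<lambda>z. norm (F z)) ` cball 0 r)"
  by (intro bounded_imp_bdd_above compact_imp_bounded compact_continuous_image
      continuous_on_norm continuous_on_subset[OF assms]) auto

lemma sup_norm_cball_upper:
  fixes F :: "'a::{heine_borel,real_normed_vector} \<Rightarrow> 'b::real_normed_vector"
  assumes "continuous_on UNIV F" "norm z \<le> r"
  shows "norm (F z) \<le> sup_norm_cball F r"
  unfolding sup_norm_cball_def
  using assms by (intro cSUP_upper sup_norm_cball_bdd_above) auto

lemma sup_norm_cball_nonneg: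
  fixes F :: "'a::{heine_borel,real_normed_vector} \<Rightarrow> 'b::real_normed_vector"
  assumes "continuous_on UNIV F" "0 \<le> r"
  shows "0 \<le> sup_norm_cball F r"
  using order_trans[OF norm_ge_zero sup_norm_cball_upper[OF assms(1), of 0]] assms(2) by simp

lemma sup_norm_cball_mono:
  fixes F :: "'a::{heine_borel,real_normed_vector} \<Rightarrow> 'b::real_normed_vector"
  assumes "continuous_on UNIV F" "0 \<le> r" "r \<le> r'"
  shows "sup_norm_cball F r \<le> sup_norm_cball F r'"
  unfolding sup_norm_cball_def
  using assms by (intro cSUP_subset_mono sup_norm_cball_bdd_above) auto

lemma sup_norm_cball_tendsto_0:
  fixes F :: "'a::{heine_borel,real_normed_vector} \<Rightarrow> 'b::real_normed_vector"
  assumes F: "continuous_on UNIV F" "F 0 = 0"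
  shows "(sup_norm_cball F \<longlongrightarrow> 0) (at_right 0)"
proof (rule order_tendstoI)
  show "\<forall>\<^sub>F r in at_right 0. e < sup_norm_cball F r" if "e < 0" for e
    by (intro eventually_at_rightI[of 0 1] less_le_trans[OF that sup_norm_cball_nonneg[OF F(1)]])
      auto
  show "\<forall>\<^sub>F r in at_right 0. sup_norm_cball F r < e" if e: "0 < e" for e
  proof -
    have "isCont F 0"
      using F(1) by (simp add: continuous_on_eq_continuous_at)
    then obtain d where d: "0 < d" "\<And>z. dist z 0 < d \<Longrightarrow> dist (F z) (F 0) < e / 2"
      using e unfolding continuous_at_eps_delta by (meson half_gt_zero)
    have "sup_norm_cball F r < e" if "0 < r" "r < d" for r
    proof -
      have "norm (F z) \<le> e / 2" if "z \<in> cball 0 r" for z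
        using d(2)[of z] that \<open>r < d\<close> F(2) by simp
      then have "sup_norm_cball F r \<le> e / 2"
        unfolding sup_norm_cball_def using \<open>0 < r\<close> by (intro cSUP_least) auto
      then show ?thesis
        using e by simp
    qed
    then show ?thesis
      using d(1) by (intro eventually_at_rightI[of 0 d]) auto
  qed
qed

section \<open>Gronwall estimate for a Lyapunov function along a path\<close>

lemma gronwall_affine:
  fixes \<phi> \<phi>' :: "real \<Rightarrow> real"
  assumes deriv: "\<And>x. x \<in> {0..b} \<Longrightarrow> (\<phi> has_real_derivative \<phi>' x) (at x within {0..b})"
    and bound: "\<And>x. x \<in> {0..b} \<Longrightarrow> \<phi>' x \<le> C * (\<phi> x + a)"
    and y: "y \<in> {0..b}"
  shows "\<phi> y + a \<le> exp (C * y) * (\<phi> 0 + a)"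
proof -
  \<comment> \<open>the claim says that \<open>\<psi>\<close> is nonincreasing\<close>
  define \<psi> where "\<psi> x = exp (- (C * x)) * (\<phi> x + a)" for x
  define \<psi>' where "\<psi>' x = exp (- (C * x)) * (\<phi>' x - C * (\<phi> x + a))" for x
  have \<psi>_deriv: "(\<psi> has_real_derivative \<psi>' x) (at x within {0..b})" if "x \<in> {0..b}" for x
  proof -
    have "(\<psi> has_real_derivative exp (- (C * x)) * (- C) * (\<phi> x + a) + exp (- (C * x)) * \<phi>' x)
        (at x within {0..b})"
      unfolding \<psi>_def by (auto intro!: derivative_eq_intros deriv[OF that])
    then show ?thesis
      unfolding \<psi>'_def by (simp add: algebra_simps)
  qed
  obtain x where x: "x \<in> {0..y}" "\<psi> y - \<psi> 0 = \<psi>' x * (y - 0)"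
  proof -
    have "\<exists>x\<in>{0..y}. \<psi> y - \<psi> 0 = (*) (\<psi>' x) (y - 0)"
      using y by (intro mvt_very_simple has_derivative_subset[OF \<psi>_deriv[unfolded has_field_derivative_def]])
        auto
    then show thesis
      using that by blast
  qed
  have "\<psi>' x \<le> 0"
    using bound[of x] x y unfolding \<psi>'_def by (intro mult_nonneg_nonpos) auto
  then have "\<psi>' x * (y - 0) \<le> 0"
    using x by (intro mult_nonpos_nonneg) auto
  then have "\<psi> y \<le> \<psi> 0"
    using x by simp
  then have "exp (C * y) * \<psi> y \<le> exp (C * y) * (\<phi> 0 + a)"
    by (simp add: \<psi>_def)
  moreover have "exp (C * y) * \<psi> y = \<phi> y + a"
    by (simp add: \<psi>_def mult.assoc[symmetric] exp_add[symmetric])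
  ultimately show ?thesis
    by simp
qed

lemma lyapunov_growth_along_path:
  fixes P :: "real \<Rightarrow> 'a::real_normed_vector" and R :: "'a \<Rightarrow> real"
  assumes P: "\<And>x. x \<in> {0..b} \<Longrightarrow>
      (P has_vector_derivative G x *\<^sub>R f (P x) (U x)) (at x within {0..b})"
    and G: "\<And>x. x \<in> {0..b} \<Longrightarrow> 0 \<le> G x \<and> G x \<le> C"
    and U: "\<And>x. x \<in> {0..b} \<Longrightarrow> \<bar>U x\<bar> \<le> s"
    and R: "\<And>z. (R has_derivative DR z) (at z)" "\<And>z. 0 \<le> R z"
    and Rf: "\<And>z w. DR z (f z w) \<le> R z + \<alpha> \<bar>w\<bar>" and \<alpha>: "class_K \<alpha>"
    and y: "y \<in> {0..b}"
  shows "R (P y) + \<alpha> s \<le> exp (C * y) * (R (P 0) + \<alpha> s)"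
proof (rule gronwall_affine[where \<phi> = "\<lambda>x. R (P x)"])
  have linear: "linear (DR z)" for z
    using R(1) has_derivative_linear by blast
  fix x
  assume x: "x \<in> {0..b}"
  have "((\<lambda>x. R (P x)) has_derivative (\<lambda>h. DR (P x) (h *\<^sub>R G x *\<^sub>R f (P x) (U x))))
      (at x within {0..b})"
    using has_derivative_in_compose[OF P[OF x, unfolded has_vector_derivative_def]
        has_derivative_at_withinI[OF R(1)]] by simp
  moreover have "(\<lambda>h. DR (P x) (h *\<^sub>R G x *\<^sub>R f (P x) (U x))) = (*) (G x * DR (P x) (f (P x) (U x)))"
    by (simp add: fun_eq_iff linear_scale[OF linear])
  ultimately show "((\<lambda>x. R (P x)) has_real_derivative G x * DR (P x) (f (P x) (U x)))
      (at x within {0..b})"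
    by (simp add: has_field_derivative_def)
  have "0 \<le> R (P x) + \<alpha> \<bar>U x\<bar>"
    using R(2) class_K_nonneg[OF \<alpha>] by (simp add: add_nonneg_nonneg)
  then have "G x * DR (P x) (f (P x) (U x)) \<le> C * (R (P x) + \<alpha> \<bar>U x\<bar>)"
    using G[OF x] Rf by (meson mult_left_mono mult_right_mono order_trans)
  also have "\<dots> \<le> C * (R (P x) + \<alpha> s)"
    using G[OF x] U[OF x] mono_onD[OF class_K_mono_on[OF \<alpha>]] by (intro mult_left_mono) auto
  finally show "G x * DR (P x) (f (P x) (U x)) \<le> C * (R (P x) + \<alpha> s)" .
qed (use y in auto)

section \<open>The spatial profile of a closed-loop solution\<close>

lemma Gamma_bounds:
  fixes v :: "real \<Rightarrow> real"
  assumes v: "vlow \<le> v a" "0 < vlow" and M: "0 \<le> M"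
    and r: "-M < deriv v a * b / v a" "deriv v a * b / v a < 1" and y: "0 \<le> y" "y \<le> 1"
  shows "0 < Gamma v a b y" "Gamma v a b y \<le> (1 + M) / vlow"
proof -
  define r where "r = deriv v a * b / v a"
  have v_pos: "0 < v a"
    using v by linarith
  have Gamma_eq: "Gamma v a b y = (1 - y * r) / v a"
    using v_pos by (simp add: Gamma_def r_def field_simps power2_eq_square)
  have "y * r < 1"
    using r y unfolding r_def[symmetric]
    by (cases "r \<le> 0") (auto intro: le_less_trans[OF mult_left_le_one_le] mult_nonneg_nonpos order.strict_trans1)
  then show "0 < Gamma v a b y"
    using v_pos by (simp add: Gamma_eq)
  have "y * (- M) \<le> y * r"
    using r y unfolding r_def[symmetric] by (intro mult_left_mono) auto
  moreover have "y * M \<le> M"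
    using y by (rule mult_left_le_one_le[OF M])
  ultimately have "- M \<le> y * r"
    by simp
  then have "(1 - y * r) / v a \<le> (1 + M) / v a"
    using v_pos by (intro divide_right_mono) auto
  also have "\<dots> \<le> (1 + M) / vlow"
    using v M by (intro divide_left_mono) auto
  finally show "Gamma v a b y \<le> (1 + M) / vlow"
    by (simp add: Gamma_eq)
qed

lemma continuous_on_Times_slice:
  assumes "continuous_on (A \<times> B) g" "t \<in> B"
  shows "continuous_on A (\<lambda>x. g (x, t))"
  by (rule continuous_on_compose2[OF assms(1)]) (use assms(2) in \<open>auto intro!: continuous_intros\<close>)

lemma closed_loop_u_continuous:
  assumes "closed_loop_solution f v \<kappa> X u ux ut p"
  shows "continuous_on ({0..1} \<times> {0..}) (\<lambda>z. u (fst z) (snd z))"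
  unfolding continuous_on_eq_continuous_within
proof
  fix z :: "real \<times> real"
  assume z: "z \<in> {0..1} \<times> {0..}"
  have "\<forall>x\<in>{0..1}. \<forall>t\<ge>0. ((\<lambda>z. u (fst z) (snd z)) has_derivative
      (\<lambda>h. ux x t * fst h + ut x t * snd h)) (at (x, t) within {0..1} \<times> {0..})"
    using assms unfolding closed_loop_solution_def by blast
  from this[rule_format, of "fst z" "snd z"] have "((\<lambda>z. u (fst z) (snd z)) has_derivative
      (\<lambda>h. ux (fst z) (snd z) * fst h + ut (fst z) (snd z) * snd h)) (at z within {0..1} \<times> {0..})"
    using z by (simp add: mem_Times_iff)
  then show "continuous (at z within {0..1} \<times> {0..}) (\<lambda>z. u (fst z) (snd z))"
    by (rule has_derivative_continuous)
qed

lemma closed_loop_p_eq: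
  assumes "closed_loop_solution f v \<kappa> X u ux ut p" "0 \<le> t" "x \<in> {0..1}"
  shows "p x t = X t + integral {0..x} (\<lambda>y. Gamma v (u y t) (ux y t) y *\<^sub>R f (p y t) (u y t))"
proof -
  have "((\<lambda>y. Gamma v (u y t) (ux y t) y *\<^sub>R f (p y t) (u y t)) has_integral (p x t - X t)) {0..x}"
    using assms unfolding closed_loop_solution_def by blast
  then show ?thesis
    by (simp add: integral_unique)
qed

lemma closed_loop_p_at_0:
  assumes "closed_loop_solution f v \<kappa> X u ux ut p" "0 \<le> t"
  shows "p 0 t = X t"
  using closed_loop_p_eq[OF assms] by simp

lemma closed_loop_p_has_vector_derivative:
  assumes sol: "closed_loop_solution f v \<kappa> X u ux ut p" and t: "0 \<le> t" and x: "x \<in> {0..1}"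
    and f: "continuous_on UNIV (\<lambda>z. f (fst z) (snd z))"
    and v: "\<And>s. (v has_real_derivative v' s) (at s)" "continuous_on UNIV v'" "\<And>s. 0 < v s"
  shows "((\<lambda>y. p y t) has_vector_derivative Gamma v (u x t) (ux x t) x *\<^sub>R f (p x t) (u x t))
      (at x within {0..1})"
proof -
  define g where "g = (\<lambda>y. Gamma v (u y t) (ux y t) y *\<^sub>R f (p y t) (u y t))"
  have "(g has_integral (p 1 t - X t)) {0..1}"
    using sol t unfolding closed_loop_solution_def g_def by simp
  then have "continuous_on {0..1} (\<lambda>y. X t + integral {0..y} g)"
    by (intro continuous_on_add continuous_on_const indefinite_integral_continuous_1)
      (rule has_integral_integrable)
  then have p_cont: "continuous_on {0..1} (\<lambda>y. p y t)"
    by (rule continuous_on_eq) (simp add: closed_loop_p_eq[OF sol t] g_def)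
  have u_cont: "continuous_on {0..1} (\<lambda>y. u y t)"
    using continuous_on_Times_slice[OF closed_loop_u_continuous[OF sol], of t] t by simp
  have "continuous_on ({0..1} \<times> {0..}) (\<lambda>z. ux (fst z) (snd z))"
    using sol unfolding closed_loop_solution_def by blast
  then have ux_cont: "continuous_on {0..1} (\<lambda>y. ux y t)"
    using continuous_on_Times_slice[of _ _ "\<lambda>z. ux (fst z) (snd z)" t] t by simp
  have v_cont: "continuous_on UNIV v"
    using v(1) by (intro continuous_at_imp_continuous_on) (auto intro: DERIV_isCont)
  have vu_cont: "continuous_on {0..1} (\<lambda>y. v (u y t))"
    by (rule continuous_on_compose2[OF v_cont u_cont]) auto
  have "deriv v = v'"
    using v(1) by (intro ext DERIV_imp_deriv)
  moreover have "continuous_on {0..1} (\<lambda>y. v' (u y t))"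
    by (rule continuous_on_compose2[OF v(2) u_cont]) auto
  ultimately have dvu_cont: "continuous_on {0..1} (\<lambda>y. deriv v (u y t))"
    by simp
  have pu_cont: "continuous_on {0..1} (\<lambda>y. (p y t, u y t))"
    using p_cont u_cont by (rule continuous_on_Pair)
  have fpu_cont: "continuous_on {0..1} (\<lambda>y. f (p y t) (u y t))"
    using continuous_on_compose2[OF f pu_cont subset_UNIV] by simp
  have v_ne: "v (u y t) \<noteq> 0" for y
    using v(3)[of "u y t"] by simp
  have "continuous_on {0..1} g"
    unfolding g_def Gamma_def
    by (intro continuous_intros vu_cont dvu_cont ux_cont fpu_cont) (simp_all add: v_ne)
  then have g_deriv: "((\<lambda>y. integral {0..y} g) has_vector_derivative g x) (at x within {0..1})"
    using x by (rule integral_has_vector_derivative)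
  have sum_deriv: "((\<lambda>y. X t + integral {0..y} g) has_vector_derivative g x) (at x within {0..1})"
    using has_vector_derivative_add[OF has_vector_derivative_const g_deriv] by simp
  have p_eq: "p y t = X t + integral {0..y} g" if "y \<in> {0..1}" for y
    using closed_loop_p_eq[OF sol t that] by (simp add: g_def)
  show ?thesis
    using has_vector_derivative_transform[OF x p_eq sum_deriv] by (simp add: g_def)
qed

lemma class_K_tendsto_0: "class_K \<alpha> \<Longrightarrow> (\<alpha> \<longlongrightarrow> 0) (at_right 0)"
  unfolding class_K_def
  by (metis at_within_Ici_at_right atLeast_iff continuous_on_def order.refl)

lemma profile_gain_majorant:
  fixes F :: "'a::{heine_borel,real_normed_vector} \<Rightarrow> 'b::real_normed_vector"
  assumes \<alpha>: "class_Kinf \<alpha>1" "class_K \<alpha>2" "class_K \<alpha>3"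
    and F: "continuous_on UNIV F" "F 0 = 0" and C: "0 \<le> C"
  defines "B \<equiv> \<lambda>s. upper_inverse \<alpha>1 (exp C * (\<alpha>2 s + \<alpha>3 s))"
  shows "\<exists>\<rho>. class_Kinf \<rho> \<and> (\<forall>s\<ge>0. B s + C * sup_norm_cball F (B s + s) \<le> \<rho> s)"
proof (rule class_Kinf_majorant)
  have A_nonneg: "0 \<le> exp C * (\<alpha>2 s + \<alpha>3 s)" if "0 \<le> s" for s
    using that \<alpha> by (simp add: class_K_nonneg)
  have B_nonneg: "0 \<le> B s" if "0 \<le> s" for s
    unfolding B_def using upper_inverse_nonneg[OF \<alpha>(1) A_nonneg[OF that]] .
  show "mono_on {0..} (\<lambda>s. B s + C * sup_norm_cball F (B s + s))"
  proof (rule mono_onI)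
    fix r s :: real
    assume rs: "r \<in> {0..}" "s \<in> {0..}" "r \<le> s"
    have "\<alpha>2 r + \<alpha>3 r \<le> \<alpha>2 s + \<alpha>3 s"
      using rs by (intro add_mono mono_onD[OF class_K_mono_on[OF \<alpha>(2)]]
          mono_onD[OF class_K_mono_on[OF \<alpha>(3)]]) auto
    then have "B r \<le> B s"
      unfolding B_def using rs by (intro upper_inverse_mono[OF \<alpha>(1) A_nonneg]) auto
    with rs show "B r + C * sup_norm_cball F (B r + r) \<le> B s + C * sup_norm_cball F (B s + s)"
      using B_nonneg[of r] C
      by (intro add_mono mult_left_mono sup_norm_cball_mono[OF F(1)]) auto
  qed
  show "0 \<le> B s + C * sup_norm_cball F (B s + s)" if "0 \<le> s" for s
    using that B_nonneg[OF that] C sup_norm_cball_nonneg[OF F(1)] by simp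
  have A_tendsto: "((\<lambda>s. exp C * (\<alpha>2 s + \<alpha>3 s)) \<longlongrightarrow> 0) (at_right 0)"
    using \<alpha>(2,3) by (intro tendsto_mult_right_zero tendsto_add_zero class_K_tendsto_0)
  have "\<forall>\<^sub>F s in at_right 0. 0 \<le> exp C * (\<alpha>2 s + \<alpha>3 s)"
    by (rule eventually_at_rightI[of 0 1]) (simp_all add: A_nonneg)
  then have B_tendsto: "(B \<longlongrightarrow> 0) (at_right 0)"
    unfolding B_def by (rule upper_inverse_tendsto_0[OF \<alpha>(1) A_tendsto])
  have "((\<lambda>s. B s + s) \<longlongrightarrow> 0) (at_right 0)"
    by (rule tendsto_add_zero[OF B_tendsto tendsto_ident_at])
  moreover have "\<forall>\<^sub>F s in at_right 0. 0 < B s + s"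
    by (rule eventually_at_rightI[of 0 1]) (simp_all add: add_nonneg_pos B_nonneg)
  ultimately have "filterlim (\<lambda>s. B s + s) (at_right 0) (at_right 0)"
    by (rule tendsto_imp_filterlim_at_right)
  then have "((\<lambda>s. sup_norm_cball F (B s + s)) \<longlongrightarrow> 0) (at_right 0)"
    by (rule filterlim_compose[OF sup_norm_cball_tendsto_0[OF F]])
  then show "((\<lambda>s. B s + C * sup_norm_cball F (B s + s)) \<longlongrightarrow> 0) (at_right 0)"
    by (intro tendsto_add_zero B_tendsto tendsto_mult_right_zero)
qed

lemma closed_loop_profile_bound:
  fixes f :: "'a::euclidean_space \<Rightarrow> real \<Rightarrow> 'a"
  assumes sol: "closed_loop_solution f v \<kappa> X u ux ut p" and t: "0 \<le> t"
    and bnd: "\<forall>x\<in>{0..1}. \<forall>t\<ge>0. - M < deriv v (u x t) * ux x t / v (u x t) \<and>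
                                 deriv v (u x t) * ux x t / v (u x t) < 1"
    and f: "continuous_on UNIV (\<lambda>z. f (fst z) (snd z))"
    and v: "\<And>s. (v has_real_derivative v' s) (at s)" "continuous_on UNIV v'"
      "0 < vlow" "\<And>s. vlow \<le> v s"
    and M: "0 \<le> M"
    and R: "\<And>z. (R has_derivative DR z) (at z)" "\<And>z. \<alpha>1 (norm z) \<le> R z" "\<And>z. R z \<le> \<alpha>2 (norm z)"
    and Rf: "\<And>z w. DR z (f z w) \<le> R z + \<alpha>3 \<bar>w\<bar>"
    and \<alpha>: "class_Kinf \<alpha>1" "class_K \<alpha>2" "class_K \<alpha>3"
    and s: "norm (X t) \<le> s" "\<forall>x\<in>{0..1}. \<bar>u x t\<bar> \<le> s"
    and y: "y \<in> {0..1}"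
  shows "norm (p y t) \<le> upper_inverse \<alpha>1 (exp ((1 + M) / vlow) * (\<alpha>2 s + \<alpha>3 s))"
    and "norm (vector_derivative (\<lambda>y. p y t) (at y within {0..1}))
      \<le> (1 + M) / vlow * norm (f (p y t) (u y t))"
proof -
  define C where "C = (1 + M) / vlow"
  define G where "G x = Gamma v (u x t) (ux x t) x" for x
  have G: "0 < G x" "G x \<le> C" if "x \<in> {0..1}" for x
  proof -
    have "- M < deriv v (u x t) * ux x t / v (u x t)" "deriv v (u x t) * ux x t / v (u x t) < 1"
      using bnd that t by auto
    from Gamma_bounds[OF v(4) v(3) M this] that show "0 < G x" "G x \<le> C"
      unfolding G_def C_def by auto
  qed
  have v_pos: "0 < v s" for s
    using v(3) v(4)[of s] by linarith
  have p_deriv: "((\<lambda>y. p y t) has_vector_derivative G x *\<^sub>R f (p x t) (u x t)) (at x within {0..1})"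
    if "x \<in> {0..1}" for x
    unfolding G_def by (rule closed_loop_p_has_vector_derivative[OF sol t that f v(1,2) v_pos])
  have R_nonneg: "0 \<le> R z" for z
    using R(2)[of z] class_K_nonneg[OF class_Kinf_class_K[OF \<alpha>(1)], of "norm z"] by simp
  have s_nonneg: "0 \<le> s"
    using order_trans[OF norm_ge_zero s(1)] .
  have "R (p y t) + \<alpha>3 s \<le> exp (C * y) * (R (p 0 t) + \<alpha>3 s)"
    using G(1)[THEN less_imp_le] G(2) s(2) y
    by (intro lyapunov_growth_along_path[where f = f and U = "\<lambda>y. u y t" and P = "\<lambda>y. p y t" and b = 1,
          OF p_deriv _ _ R(1) R_nonneg Rf \<alpha>(3)])
      auto
  also have "\<dots> \<le> exp C * (\<alpha>2 s + \<alpha>3 s)"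
  proof (rule mult_mono)
    have "0 \<le> C"
      using M v(3) by (simp add: C_def)
    then show "exp (C * y) \<le> exp C"
      using y by (simp add: mult_right_le_one_le)
    have "\<alpha>2 (norm (X t)) \<le> \<alpha>2 s"
      using s(1) s_nonneg by (intro mono_onD[OF class_K_mono_on[OF \<alpha>(2)]]) auto
    then show "R (p 0 t) + \<alpha>3 s \<le> \<alpha>2 s + \<alpha>3 s"
      using closed_loop_p_at_0[OF sol t] R(3)[of "X t"] by simp
  qed (use R_nonneg class_K_nonneg[OF \<alpha>(3) s_nonneg] in \<open>auto simp: add_nonneg_nonneg\<close>)
  finally have "\<alpha>1 (norm (p y t)) \<le> exp C * (\<alpha>2 s + \<alpha>3 s)"
    using R(2)[of "p y t"] class_K_nonneg[OF \<alpha>(3) s_nonneg] by linarith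
  then show "norm (p y t) \<le> upper_inverse \<alpha>1 (exp ((1 + M) / vlow) * (\<alpha>2 s + \<alpha>3 s))"
    unfolding C_def by (intro upper_inverse_upper[OF \<alpha>(1)]) auto
  have "vector_derivative (\<lambda>y. p y t) (at y within {0..1}) = G y *\<^sub>R f (p y t) (u y t)"
    using y by (intro vector_derivative_within_closed_interval p_deriv) auto
  then show "norm (vector_derivative (\<lambda>y. p y t) (at y within {0..1}))
      \<le> (1 + M) / vlow * norm (f (p y t) (u y t))"
    using G[OF y] mult_right_mono[OF G(2)[OF y] norm_ge_zero] by (simp add: C_def)
qed

lemma C1_fun_continuous_on: "C1_fun g \<Longrightarrow> continuous_on UNIV g"
  unfolding C1_fun_def
  by (blast intro: continuous_at_imp_continuous_on has_derivative_continuous)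

lemma C2_fun_real_derivative:
  fixes v :: "real \<Rightarrow> real"
  assumes "C2_fun v"
  shows "\<exists>v'. (\<forall>s. (v has_real_derivative v' s) (at s)) \<and> continuous_on UNIV v'"
proof -
  obtain D where D: "\<And>s. (v has_derivative blinfun_apply (D s)) (at s)" "C1_fun D"
    using assms unfolding C2_fun_def by blast
  have "blinfun_apply (D s) = (*) (D s 1)" for s
  proof
    fix h :: real
    show "D s h = D s 1 * h"
      using blinfun.scaleR_right[of "D s" h 1] by simp
  qed
  then have "(v has_real_derivative D s 1) (at s)" for s
    using D(1) by (simp add: has_field_derivative_def)
  moreover have "continuous_on UNIV (\<lambda>s. D s 1)"
    using continuous_on_blinfun_matrix[OF C1_fun_continuous_on[OF D(2)], of 1 1] by simp
  ultimately show ?thesis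
    by (intro exI[of _ "\<lambda>s. D s 1"]) simp
qed

lemma closed_loop_sup_bound:
  fixes f :: "'a::euclidean_space \<Rightarrow> real \<Rightarrow> 'a"
  assumes sol: "closed_loop_solution f v \<kappa> X u ux ut p" and t: "0 \<le> t"
    and bnd: "\<forall>x\<in>{0..1}. \<forall>t\<ge>0. - M < deriv v (u x t) * ux x t / v (u x t) \<and>
                                 deriv v (u x t) * ux x t / v (u x t) < 1"
    and f: "continuous_on UNIV (\<lambda>z. f (fst z) (snd z))"
    and v: "\<And>s. (v has_real_derivative v' s) (at s)" "continuous_on UNIV v'"
      "0 < vlow" "\<And>s. vlow \<le> v s"
    and M: "0 \<le> M"
    and R: "\<And>z. (R has_derivative DR z) (at z)" "\<And>z. \<alpha>1 (norm z) \<le> R z" "\<And>z. R z \<le> \<alpha>2 (norm z)"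
    and Rf: "\<And>z w. DR z (f z w) \<le> R z + \<alpha>3 \<bar>w\<bar>"
    and \<alpha>: "class_Kinf \<alpha>1" "class_K \<alpha>2" "class_K \<alpha>3"
    and s_def: "s = norm (X t) + (SUP x\<in>{0..1}. \<bar>u x t\<bar>)"
  defines "B \<equiv> upper_inverse \<alpha>1 (exp ((1 + M) / vlow) * (\<alpha>2 s + \<alpha>3 s))"
  shows "0 \<le> s"
    and "(SUP x\<in>{0..1}. norm (p x t))
      + (SUP x\<in>{0..1}. norm (vector_derivative (\<lambda>y. p y t) (at x within {0..1})))
    \<le> B + (1 + M) / vlow * sup_norm_cball (\<lambda>z. f (fst z) (snd z)) (B + s)"
proof -
  have "continuous_on {0..1} (\<lambda>y. \<bar>u y t\<bar>)"
    using continuous_on_Times_slice[OF closed_loop_u_continuous[OF sol], of t] t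
    by (simp add: continuous_on_rabs)
  then have "bdd_above ((\<lambda>y. \<bar>u y t\<bar>) ` {0..1})"
    by (intro bounded_imp_bdd_above compact_imp_bounded compact_continuous_image) auto
  then have u_le: "\<bar>u y t\<bar> \<le> (SUP x\<in>{0..1}. \<bar>u x t\<bar>)" if "y \<in> {0..1}" for y
    using that by (rule cSUP_upper2) simp
  have X_le: "norm (X t) \<le> s"
    using u_le[of 0] by (simp add: s_def)
  have u_le_s: "\<forall>y\<in>{0..1}. \<bar>u y t\<bar> \<le> s"
  proof
    fix y :: real
    assume "y \<in> {0..1}"
    then show "\<bar>u y t\<bar> \<le> s"
      using u_le[of y] norm_ge_zero[of "X t"] unfolding s_def by linarith
  qed
  show "0 \<le> s"
    using order_trans[OF norm_ge_zero X_le] .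
  note bound = closed_loop_profile_bound[OF sol t bnd f v M R Rf \<alpha> X_le u_le_s]
  have p_le: "norm (p y t) \<le> B" if "y \<in> {0..1}" for y
    unfolding B_def using bound(1)[OF that] .
  have C_nonneg: "0 \<le> (1 + M) / vlow"
    using M v(3) by simp
  have "norm (vector_derivative (\<lambda>y. p y t) (at y within {0..1}))
      \<le> (1 + M) / vlow * sup_norm_cball (\<lambda>z. f (fst z) (snd z)) (B + s)" if "y \<in> {0..1}" for y
  proof -
    have "\<bar>u y t\<bar> \<le> s"
      using u_le_s that ..
    then have "norm (p y t, u y t) \<le> B + s"
      using norm_Pair_le[of "p y t" "u y t"] p_le[OF that] by simp
    then have "norm (f (p y t) (u y t)) \<le> sup_norm_cball (\<lambda>z. f (fst z) (snd z)) (B + s)"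
      using sup_norm_cball_upper[OF f, of "(p y t, u y t)"] by simp
    then show ?thesis
      by (rule order_trans[OF bound(2)[OF that] mult_left_mono[OF _ C_nonneg]])
  qed
  with p_le show "(SUP x\<in>{0..1}. norm (p x t))
      + (SUP x\<in>{0..1}. norm (vector_derivative (\<lambda>y. p y t) (at x within {0..1})))
    \<le> B + (1 + M) / vlow * sup_norm_cball (\<lambda>z. f (fst z) (snd z)) (B + s)"
    by (intro add_mono cSUP_least) auto
qed

lemma closed_loop_profile_gain:
  fixes f :: "'a::euclidean_space \<Rightarrow> real \<Rightarrow> 'a"
  assumes f: "continuous_on UNIV (\<lambda>z. f (fst z) (snd z))" "f 0 0 = 0"
    and v: "\<And>s. (v has_real_derivative v' s) (at s)" "continuous_on UNIV v'"
      "0 < vlow" "\<And>s. vlow \<le> v s"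
    and M: "0 \<le> M"
    and R: "\<And>z. (R has_derivative DR z) (at z)" "\<And>z. \<alpha>1 (norm z) \<le> R z" "\<And>z. R z \<le> \<alpha>2 (norm z)"
    and Rf: "\<And>z w. DR z (f z w) \<le> R z + \<alpha>3 \<bar>w\<bar>"
    and \<alpha>: "class_Kinf \<alpha>1" "class_K \<alpha>2" "class_K \<alpha>3"
  shows "\<exists>\<rho>. class_Kinf \<rho> \<and>
    (\<forall>X u ux ut p. closed_loop_solution f v \<kappa> X u ux ut p \<and>
       (\<forall>x\<in>{0..1}. \<forall>t\<ge>0. - M < deriv v (u x t) * ux x t / v (u x t) \<and>
                             deriv v (u x t) * ux x t / v (u x t) < 1)
     \<longrightarrow> (\<forall>t\<ge>0. (SUP x\<in>{0..1}. norm (p x t))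
                  + (SUP x\<in>{0..1}. norm (vector_derivative (\<lambda>y. p y t) (at x within {0..1})))
                 \<le> \<rho> (norm (X t) + (SUP x\<in>{0..1}. \<bar>u x t\<bar>))))"
proof -
  obtain \<rho> where \<rho>: "class_Kinf \<rho>"
    "\<And>s. 0 \<le> s \<Longrightarrow> upper_inverse \<alpha>1 (exp ((1 + M) / vlow) * (\<alpha>2 s + \<alpha>3 s))
        + (1 + M) / vlow * sup_norm_cball (\<lambda>z. f (fst z) (snd z))
            (upper_inverse \<alpha>1 (exp ((1 + M) / vlow) * (\<alpha>2 s + \<alpha>3 s)) + s) \<le> \<rho> s"
  proof (rule profile_gain_majorant[OF \<alpha> f(1), THEN exE])
    show "f (fst 0) (snd 0) = 0"
      using f(2) by (simp add: zero_prod_def)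
    show "0 \<le> (1 + M) / vlow"
      using M v(3) by simp
  qed blast
  show ?thesis
  proof (intro exI[of _ \<rho>] conjI allI impI)
    fix X u ux ut p and t :: real
    assume H: "closed_loop_solution f v \<kappa> X u ux ut p \<and>
       (\<forall>x\<in>{0..1}. \<forall>t\<ge>0. - M < deriv v (u x t) * ux x t / v (u x t) \<and>
                             deriv v (u x t) * ux x t / v (u x t) < 1)" and t: "0 \<le> t"
    note bound = closed_loop_sup_bound[OF conjunct1[OF H] t conjunct2[OF H] f(1) v M R Rf \<alpha> refl]
    show "(SUP x\<in>{0..1}. norm (p x t))
        + (SUP x\<in>{0..1}. norm (vector_derivative (\<lambda>y. p y t) (at x within {0..1})))
      \<le> \<rho> (norm (X t) + (SUP x\<in>{0..1}. \<bar>u x t\<bar>))"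
      by (rule order_trans[OF bound(2) \<rho>(2)[OF bound(1)]])
  qed (fact \<rho>(1))
qed

theorem lemma3:
  fixes f :: "real^'n \<Rightarrow> real \<Rightarrow> real^'n" and v :: "real \<Rightarrow> real"
    and \<kappa> :: "real^'n \<Rightarrow> real" and vlow M :: real
  assumes f_C1: "C1_fun (\<lambda>z. f (fst z) (snd z))" and f0: "f 0 0 = 0"
    and A1: "C2_fun v" "vlow > 0" "\<forall>s. v s \<ge> vlow"
    and A2: "\<exists>R \<alpha>1 \<alpha>2 \<alpha>3. smooth_fun R \<and> (\<forall>X. R X \<ge> 0) \<and>
               class_Kinf \<alpha>1 \<and> class_Kinf \<alpha>2 \<and> class_Kinf \<alpha>3 \<and>
               (\<forall>X. \<alpha>1 (norm X) \<le> R X \<and> R X \<le> \<alpha>2 (norm X)) \<and>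
               (\<forall>X w. frechet_derivative R (at X) (f X w) \<le> R X + \<alpha>3 \<bar>w\<bar>)"
    and A3: "C2_fun \<kappa>" "\<kappa> 0 = 0" "ISS (\<lambda>X w. f X (\<kappa> X + w))"
    and M: "M > 0"
  shows "\<exists>\<rho>1. class_Kinf \<rho>1 \<and>
    (\<forall>X u ux ut p. closed_loop_solution f v \<kappa> X u ux ut p \<and>
       (\<forall>x\<in>{0..1}. \<forall>t\<ge>0. - M < deriv v (u x t) * ux x t / v (u x t) \<and>
                             deriv v (u x t) * ux x t / v (u x t) < 1)
     \<longrightarrow> (\<forall>t\<ge>0. (SUP x\<in>{0..1}. norm (p x t))
                  + (SUP x\<in>{0..1}. norm (vector_derivative (\<lambda>y. p y t) (at x within {0..1})))
                 \<le> \<rho>1 (norm (X t) + (SUP x\<in>{0..1}. \<bar>u x t\<bar>))))"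
proof -
  obtain R \<alpha>1 \<alpha>2 \<alpha>3 where R: "smooth_fun R" "\<And>z. \<alpha>1 (norm z) \<le> R z" "\<And>z. R z \<le> \<alpha>2 (norm z)"
    and K: "class_Kinf \<alpha>1" "class_Kinf \<alpha>2" "class_Kinf \<alpha>3"
    and R_decay: "\<And>z w. frechet_derivative R (at z) (f z w) \<le> R z + \<alpha>3 \<bar>w\<bar>"
    using A2 by blast
  obtain DR where DR: "\<And>z. (R has_derivative DR z) (at z)"
    using R(1) unfolding smooth_fun_def by blast
  have Rf: "DR z (f z w) \<le> R z + \<alpha>3 \<bar>w\<bar>" for z w
    using R_decay[of z w] by (simp add: frechet_derivative_at[OF DR[of z], symmetric])
  obtain v' where v': "\<And>s. (v has_real_derivative v' s) (at s)" "continuous_on UNIV v'"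
    using C2_fun_real_derivative[OF A1(1)] by blast
  show ?thesis
    using K by (intro closed_loop_profile_gain[OF C1_fun_continuous_on[OF f_C1] f0 v' A1(2)
        A1(3)[rule_format] less_imp_le[OF M] DR R(2,3) Rf]) (simp_all add: class_Kinf_class_K)
qed

end
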